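(* Let $n\ge1$ and $\mathbf t=[t_0,\dots,t_{n-1}]\in\Delta_{n-1}$. The edge weighting $c_{\mathbf t}:E_n\to\mathbb C$, $c_{\mathbf t}(ij) = (-1)^{\mathrm{par}_k(i)}\sqrt{t_k}$ for the edge $ij$ ($i\in U_n$) with $j = i\#k$, is admissible, and $U_n(c_{\mathbf t}) = U_n$.
   Context: For $n\ge1$, identify integers $0\le i<2^n$ with their $n$-digit binary representations $i=\sum_k i_k2^k$; $\mathrm{par}_k(i)=\sum_{\ell=0}^k i_\ell\bmod 2$ and $i\#k$ is $i$ with its $k$-th digit flipped. The hypercube $Q_n$ has vertex classes $U_n=\{i<2^n\mid\mathrm{par}_{n-1}(i)=0\}$, $V_n=\{j<2^n\mid \mathrm{par}_{n-1}(j)=1\}$ and edge set $E_n$ of pairs $ij$ ($i\in U_n$, $j\in V_n$, $j=i\#k$ for some $k<n$); $\mathcal N(x)$ is the set of neighbors of $x$. $\Delta_{n-1}=\{[t_0,\dots,t_{n-1}]\mid t_k\ge0,\sum t_k=1\}$. For $c:E_n\to\mathbb C$, $Q_n(c)=(U_n(c),V_n(c),E_n(c))$ is the subgraph formed by the edges with $c(ij)\ne0$ and their endpoints; $c$ is admissible if $\sum_{i\in\mathcal N(j_1)\cap\mathcal N(j_2)}c(ij_1)\overline{c(ij_2)}=\delta_{j_1j_2}$ for all $j_1,j_2\in V_n(c)$ and $\sum_{j\in\mathcal N(i_1)\cap\mathcal N(i_2)}c(i_1j)\overline{c(i_2j)}=\delta_{i_1i_2}$ for all $i_1,i_2\in U_n(c)$.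 *)

theory Defs
  imports Complex_Main
begin

text \<open>Vertices of Q_n are naturals i < 2^n; digit k of i is bit i k.\<close>

definition par :: "nat \<Rightarrow> nat \<Rightarrow> nat" where
  "par k i = (\<Sum>l\<le>k. if bit i l then 1 else 0) mod 2"

definition flip :: "nat \<Rightarrow> nat \<Rightarrow> nat" where
  "flip i k = flip_bit k i"

definition Uset :: "nat \<Rightarrow> nat set" where
  "Uset n = {i. i < 2^n \<and> par (n - 1) i = 0}"

definition Vset :: "nat \<Rightarrow> nat set" where
  "Vset n = {j. j < 2^n \<and> par (n - 1) j = 1}"

definition Eset :: "nat \<Rightarrow> (nat \<times> nat) set" where
  "Eset n = {(i, j). i \<in> Uset n \<and> j \<in> Vset n \<and> (\<exists>k<n. j = flip i k)}"

definition nbrs :: "nat \<Rightarrow> nat \<Rightarrow> nat set" where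
  "nbrs n x = {y. y < 2^n \<and> (\<exists>k<n. y = flip x k)}"

definition simplex :: "nat \<Rightarrow> (nat \<Rightarrow> real) \<Rightarrow> bool" where
  "simplex n t \<longleftrightarrow> (\<forall>k<n. t k \<ge> 0) \<and> (\<Sum>k<n. t k) = 1"

text \<open>Edge weightings are functions on pairs (i,j), i in U_n; only values on Eset n matter.\<close>
definition Uc :: "nat \<Rightarrow> (nat \<times> nat \<Rightarrow> complex) \<Rightarrow> nat set" where
  "Uc n c = {i. \<exists>j. (i, j) \<in> Eset n \<and> c (i, j) \<noteq> 0}"

definition Vc :: "nat \<Rightarrow> (nat \<times> nat \<Rightarrow> complex) \<Rightarrow> nat set" where
  "Vc n c = {j. \<exists>i. (i, j) \<in> Eset n \<and> c (i, j) \<noteq> 0}"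

definition admissible :: "nat \<Rightarrow> (nat \<times> nat \<Rightarrow> complex) \<Rightarrow> bool" where
  "admissible n c \<longleftrightarrow>
     (\<forall>j1\<in>Vc n c. \<forall>j2\<in>Vc n c.
        (\<Sum>i\<in>nbrs n j1 \<inter> nbrs n j2. c (i, j1) * cnj (c (i, j2))) = (if j1 = j2 then 1 else 0)) \<and>
     (\<forall>i1\<in>Uc n c. \<forall>i2\<in>Uc n c.
        (\<Sum>j\<in>nbrs n i1 \<inter> nbrs n i2. c (i1, j) * cnj (c (i2, j))) = (if i1 = i2 then 1 else 0))"

definition ct :: "nat \<Rightarrow> (nat \<Rightarrow> real) \<Rightarrow> nat \<times> nat \<Rightarrow> complex" where
  "ct n t e = (case e of (i, j) \<Rightarrow>
     if (i, j) \<in> Eset n then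
       (let k = (THE k. k < n \<and> j = flip i k) in
          (-1) ^ par k i * complex_of_real (sqrt (t k)))
     else 0)"

end

theory Submission
  imports Defs
begin

text \<open>Up to a sign depending only on the side of the bipartition, the weight of the edge
  between x and x # k is h_k(x) = (-1)^par_k(x) sqrt t_k. Two distinct vertices of the same
  side have common neighbours only if they differ in exactly two digits a < b; then the two
  common neighbours contribute h_a(x) h_b(y) + h_b(x) h_a(y), and flipping digit a changes
  par_b but not par_a, so the two products cancel. On the diagonal the Gram sum is
  \<Sum>_k t_k = 1.\<close>

lemma bit_flip_iff: "bit (flip x a) l \<longleftrightarrow> (if l = a then \<not> bit x l else bit x l)"
  unfolding flip_def by (auto simp: bit_flip_bit_iff)

lemma flip_flip [simp]: "flip (flip x a) a = x"
  by (rule bit_eqI) (auto simp: bit_flip_iff)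

lemma flip_commute: "flip (flip x a) b = flip (flip x b) a"
  by (rule bit_eqI) (auto simp: bit_flip_iff)

lemma flip_eq_flip_iff [simp]: "flip x a = flip x b \<longleftrightarrow> a = b"
  by (metis bit_flip_iff)

lemma flip_less_power: "x < 2 ^ n \<Longrightarrow> a < n \<Longrightarrow> flip x a < (2::nat) ^ n"
  unfolding flip_def by (metis take_bit_flip_bit_eq take_bit_nat_eq_self_iff not_le)

lemma flip_flip_eq_flip_flipD:
  assumes "flip (flip x a) b = flip (flip x c) d" "a \<noteq> b"
  shows "(a = c \<and> b = d) \<or> (a = d \<and> b = c)"
proof -
  have "((l = a) \<noteq> (l = b)) = ((l = c) \<noteq> (l = d))" for l
    using arg_cong[OF assms(1), of "\<lambda>z. bit z l"] by (auto simp: bit_flip_iff split: if_splits)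
  from this[of a] this[of b] this[of c] assms(2) show ?thesis by blast
qed

lemma minus_one_power_par: "(-1::'a::comm_ring_1) ^ par k x = (\<Prod>l\<le>k. if bit x l then -1 else 1)"
proof -
  have "(-1::'a) ^ par k x = (-1) ^ (\<Sum>l\<le>k. if bit x l then 1 else 0::nat)"
    unfolding par_def by (simp add: minus_one_power_iff)
  then show ?thesis
    by (simp add: power_sum if_distrib cong: if_cong)
qed

lemma minus_one_power_par_flip:
  "(-1::'a::comm_ring_1) ^ par k (flip x m) = (if m \<le> k then - ((-1) ^ par k x) else (-1) ^ par k x)"
proof (cases "m \<le> k")
  case True
  let ?s = "\<lambda>y l. if bit y l then -1 else 1::'a"
  have rest: "(\<Prod>l\<in>{..k} - {m}. ?s (flip x m) l) = (\<Prod>l\<in>{..k} - {m}. ?s x l)"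
    by (rule prod.cong) (auto simp: bit_flip_iff)
  have "(\<Prod>l\<le>k. ?s (flip x m) l) = ?s (flip x m) m * (\<Prod>l\<in>{..k} - {m}. ?s (flip x m) l)"
    using True by (intro prod.remove) auto
  also have "\<dots> = - (?s x m * (\<Prod>l\<in>{..k} - {m}. ?s x l))"
    unfolding rest by (simp add: bit_flip_iff)
  also have "?s x m * (\<Prod>l\<in>{..k} - {m}. ?s x l) = (\<Prod>l\<le>k. ?s x l)"
    using True by (intro prod.remove[symmetric]) auto
  finally show ?thesis
    using True by (simp add: minus_one_power_par)
next
  case False
  then show ?thesis
    by (auto simp: minus_one_power_par bit_flip_iff intro!: prod.cong)
qed

lemma par_less_2: "par k x < 2"
  unfolding par_def by simp

lemma par_flip_of_le: "m \<le> k \<Longrightarrow> par k (flip x m) = 1 - par k x"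
  using minus_one_power_par_flip[where 'a = int, of k x m] par_less_2[of k x]
    par_less_2[of k "flip x m"]
  by (auto simp: minus_one_power_iff less_2_cases_iff)

lemma flip_in_Vset_iff:
  assumes "x < 2 ^ n" "a < n"
  shows "flip x a \<in> Vset n \<longleftrightarrow> x \<in> Uset n"
  using assms flip_less_power[OF assms] par_flip_of_le[of a "n - 1" x] par_less_2[of "n - 1" x]
  unfolding Uset_def Vset_def by auto

lemma flip_in_Uset_iff:
  assumes "x < 2 ^ n" "a < n"
  shows "flip x a \<in> Uset n \<longleftrightarrow> x \<in> Vset n"
  using flip_in_Vset_iff[OF flip_less_power[OF assms] assms(2)] by simp

lemma Uset_less_power: "x \<in> Uset n \<Longrightarrow> x < 2 ^ n"
  unfolding Uset_def by simp

lemma Vset_less_power: "x \<in> Vset n \<Longrightarrow> x < 2 ^ n"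
  unfolding Vset_def by simp

lemma Uc_subset_Uset: "Uc n c \<subseteq> Uset n"
  unfolding Uc_def Eset_def by auto

lemma Vc_subset_Vset: "Vc n c \<subseteq> Vset n"
  unfolding Vc_def Eset_def by auto

definition hweight :: "(nat \<Rightarrow> real) \<Rightarrow> nat \<Rightarrow> nat \<Rightarrow> real" where
  "hweight t x k = (-1) ^ par k x * sqrt (t k)"

lemma ct_Uset:
  assumes "i \<in> Uset n" "k < n"
  shows "ct n t (i, flip i k) = complex_of_real (hweight t i k)"
proof -
  have "(i, flip i k) \<in> Eset n"
    using assms flip_in_Vset_iff Uset_less_power unfolding Eset_def by blast
  moreover have "(THE k'. k' < n \<and> flip i k = flip i k') = k"
    using assms(2) by (intro the_equality) auto
  ultimately show ?thesis
    by (simp add: ct_def hweight_def)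
qed

lemma ct_Vset:
  assumes "j \<in> Vset n" "k < n"
  shows "ct n t (flip j k, j) = - complex_of_real (hweight t j k)"
  using ct_Uset[of "flip j k" n k t] assms
  by (simp add: flip_in_Uset_iff Vset_less_power hweight_def minus_one_power_par_flip)

lemma hweight_square: "t k \<ge> 0 \<Longrightarrow> hweight t x k * hweight t x k = t k"
  by (simp add: hweight_def minus_one_power_iff)

lemma hweight_flip_flip_cancel:
  assumes "a \<noteq> b"
  shows "hweight t x a * hweight t (flip (flip x a) b) b
       + hweight t x b * hweight t (flip (flip x a) b) a = 0"
proof -
  have "(-1::real) ^ par a x * (-1) ^ par b (flip (flip x a) b)
      = - ((-1) ^ par b x * (-1) ^ par a (flip (flip x a) b))"
    using assms by (simp add: minus_one_power_par_flip flip_commute[of x a b])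
  then show ?thesis
    unfolding hweight_def by (simp add: algebra_simps)
qed

lemma nbrs_eq_image: "x < 2 ^ n \<Longrightarrow> nbrs n x = flip x ` {..<n}"
  unfolding nbrs_def using flip_less_power by auto

lemma common_nbrD:
  assumes "z \<in> nbrs n x" "z \<in> nbrs n y" "x \<noteq> y"
  obtains a b where "a < n" "b < n" "a \<noteq> b" "y = flip (flip x a) b" "z = flip x a"
proof -
  obtain a b where "a < n" "b < n" "z = flip x a" "z = flip y b"
    using assms(1,2) unfolding nbrs_def by auto
  moreover from this have "y = flip (flip x a) b"
    by (metis flip_flip)
  ultimately show ?thesis
    using that assms(3) by fastforce
qed

lemma nbrs_Int_nbrs_flip_flip:
  assumes "x < 2 ^ n" "a < n" "b < n" "a \<noteq> b"
  shows "nbrs n x \<inter> nbrs n (flip (flip x a) b) = {flip x a, flip x b}"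
proof
  show "nbrs n x \<inter> nbrs n (flip (flip x a) b) \<subseteq> {flip x a, flip x b}"
  proof
    fix z
    assume z: "z \<in> nbrs n x \<inter> nbrs n (flip (flip x a) b)"
    have "flip (flip x a) b \<noteq> x"
      using assms(4) by (metis flip_flip flip_eq_flip_iff)
    with z obtain c d where "flip (flip x a) b = flip (flip x c) d" "z = flip x c"
      by (auto elim: common_nbrD)
    then show "z \<in> {flip x a, flip x b}"
      using flip_flip_eq_flip_flipD[OF _ assms(4)] by blast
  qed
  have "flip x a = flip (flip (flip x a) b) b" "flip x b = flip (flip (flip x a) b) a"
    by (metis flip_flip flip_commute)+
  then show "{flip x a, flip x b} \<subseteq> nbrs n x \<inter> nbrs n (flip (flip x a) b)"
    using assms flip_less_power unfolding nbrs_def by blast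
qed

lemma simplex_sum_eq_1: "simplex n t \<Longrightarrow> (\<Sum>k<n. t k) = 1"
  unfolding simplex_def by simp

lemma simplex_nonneg: "simplex n t \<Longrightarrow> k < n \<Longrightarrow> t k \<ge> 0"
  unfolding simplex_def by simp

lemma simplex_ex_pos:
  assumes "simplex n t"
  obtains k where "k < n" "t k > 0"
proof (rule ccontr)
  assume "\<not> thesis"
  then have "(\<Sum>k<n. t k) \<le> 0"
    using that by (intro sum_nonpos) force
  then show False
    using simplex_sum_eq_1[OF assms] by simp
qed

text \<open>The unit \<epsilon> absorbs the side-dependent sign: it is 1 for x, y \<in> U_n and -1 for
  x, y \<in> V_n, where the edge to j # k carries the parity of j # k rather than of j.\<close>

lemma gram_sum_hweight:
  fixes g :: "nat \<Rightarrow> nat \<Rightarrow> complex"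
  assumes t: "simplex n t" and xy: "x < 2 ^ n" "y < 2 ^ n" and unit: "\<epsilon> * cnj \<epsilon> = 1"
    and gx: "\<And>k. k < n \<Longrightarrow> g x (flip x k) = \<epsilon> * of_real (hweight t x k)"
    and gy: "\<And>k. k < n \<Longrightarrow> g y (flip y k) = \<epsilon> * of_real (hweight t y k)"
  shows "(\<Sum>z\<in>nbrs n x \<inter> nbrs n y. g x z * cnj (g y z)) = (if x = y then 1 else 0)"
proof -
  have g_mult_cnj: "g x (flip x a) * cnj (g y (flip y b)) = of_real (hweight t x a * hweight t y b)"
    if "a < n" "b < n" for a b
  proof -
    have "g x (flip x a) * cnj (g y (flip y b))
        = (\<epsilon> * cnj \<epsilon>) * of_real (hweight t x a * hweight t y b)"
      using that by (simp add: gx gy)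
    then show ?thesis
      using unit by simp
  qed
  consider "x = y"
    | a b where "a < n" "b < n" "a \<noteq> b" "y = flip (flip x a) b"
    | "x \<noteq> y" "nbrs n x \<inter> nbrs n y = {}"
    by (metis common_nbrD disjoint_iff)
  then show ?thesis
  proof cases
    case 1
    have "inj_on (flip x) {..<n}"
      by (simp add: inj_on_def)
    then have "(\<Sum>z\<in>nbrs n x \<inter> nbrs n y. g x z * cnj (g y z))
        = (\<Sum>k<n. g x (flip x k) * cnj (g y (flip y k)))"
      using 1 xy by (simp add: nbrs_eq_image sum.reindex)
    also have "\<dots> = of_real (\<Sum>k<n. t k)"
      unfolding of_real_sum
      using g_mult_cnj 1
      by (intro sum.cong) (simp_all add: hweight_square simplex_nonneg[OF t] flip: of_real_mult)
    finally show ?thesis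
      using 1 t by (simp add: simplex_sum_eq_1)
  next
    case 2
    then have "x \<noteq> y"
      by (metis flip_flip flip_eq_flip_iff)
    have flips: "flip y b = flip x a" "flip y a = flip x b"
      using 2 by (metis flip_flip flip_commute)+
    have "nbrs n x \<inter> nbrs n y = {flip x a, flip x b}"
      using 2 xy by (simp add: nbrs_Int_nbrs_flip_flip)
    then have "(\<Sum>z\<in>nbrs n x \<inter> nbrs n y. g x z * cnj (g y z))
        = g x (flip x a) * cnj (g y (flip y b)) + g x (flip x b) * cnj (g y (flip y a))"
      using 2(3) by (simp add: flips)
    also have "\<dots> = of_real (hweight t x a * hweight t y b + hweight t x b * hweight t y a)"
      using 2(1,2) by (simp add: g_mult_cnj)
    also have "\<dots> = 0"
      using 2(3,4) by (simp add: hweight_flip_flip_cancel)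
    finally show ?thesis
      using \<open>x \<noteq> y\<close> by simp
  next
    case 3
    then show ?thesis by simp
  qed
qed

theorem proposition4p8:
  fixes n :: nat and t :: "nat \<Rightarrow> real"
  assumes "n \<ge> 1" and "simplex n t"
  shows "admissible n (ct n t) \<and> Uc n (ct n t) = Uset n"
proof -
  have U: "(\<Sum>j\<in>nbrs n i1 \<inter> nbrs n i2. ct n t (i1, j) * cnj (ct n t (i2, j)))
      = (if i1 = i2 then 1 else 0)" if "i1 \<in> Uset n" "i2 \<in> Uset n" for i1 i2
    using that assms(2)
    by (intro gram_sum_hweight[where g = "\<lambda>i j. ct n t (i, j)" and \<epsilon> = 1])
      (simp_all add: Uset_less_power ct_Uset)
  have V: "(\<Sum>i\<in>nbrs n j1 \<inter> nbrs n j2. ct n t (i, j1) * cnj (ct n t (i, j2)))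
      = (if j1 = j2 then 1 else 0)" if "j1 \<in> Vset n" "j2 \<in> Vset n" for j1 j2
    using that assms(2)
    by (intro gram_sum_hweight[where g = "\<lambda>j i. ct n t (i, j)" and \<epsilon> = "-1"])
      (simp_all add: Vset_less_power ct_Vset)
  have "Uset n \<subseteq> Uc n (ct n t)"
  proof
    fix i
    assume i: "i \<in> Uset n"
    obtain k where k: "k < n" "t k > 0"
      using simplex_ex_pos[OF assms(2)] .
    then have "(i, flip i k) \<in> Eset n" "ct n t (i, flip i k) \<noteq> 0"
      using i flip_in_Vset_iff Uset_less_power by (auto simp: Eset_def ct_Uset hweight_def)
    then show "i \<in> Uc n (ct n t)"
      unfolding Uc_def by blast
  qed
  then show ?thesis
    using U V Uc_subset_Uset Vc_subset_Vset unfolding admissible_def by blast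
qed

end
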